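(* Let $\mathbf{c}_{0:n}=(c_0,\dots,c_n)$ be a vector of covariance lags of some bounded non-negative measure on $\mathbb{T}$ such that the Toeplitz matrix $T_n=[c_{k-\ell}]_{k,\ell=0}^n$ (with $c_{-k}=\bar c_k$) is singular, and let $\hat{\mathbf{c}}_{0:n}(k)$, $k=1,2,\dots$, be a sequence of vectors of covariance lags (each the first $n+1$ covariances of some bounded non-negative measure on $\mathbb{T}$) with $\hat{\mathbf{c}}_{0:n}(k)\to\mathbf{c}_{0:n}$ as $k\to\infty$. If $\delta$ is a weakly continuous metric on the set $\mathfrak{M}$ of bounded non-negative measures on $\mathbb{T}$, then $\rho_\delta(\mathcal{F}_{\hat{\mathbf{c}}_{0:n}(k)})\to0$ as $k\to\infty$.
   Context: Covariance lags of $d\mu$: $c_k=\frac{1}{2\pi}\int_{-\pi}^{\pi}e^{-ik\theta}d\mu(\theta)$. For $\mathbf{a}=(a_0,\dots,a_n)$, $\mathcal{F}_{\mathbf{a}}=\{d\mu\in\mathfrak{M}:\frac{1}{2\pi}\int_{-\pi}^{\pi}e^{-ik\theta}d\mu(\theta)=a_k,\ k=0,\dots,n\}$. The diameter is $\rho_\delta(\mathcal{F})=\sup\{\delta(d\mu_0,d\mu_1):d\mu_0,d\mu_1\in\mathcal{F}\}$. Weak topology on $\mathfrak{M}$: $d\mu_k\to d\mu$ iff $\int fd\mu_k\to\int fd\mu$ for all real continuous $f$ on $\mathbb{T}$; $\delta$ is weakly continuous if it is continuous on $\mathfrak{M}\times\mathfrak{M}$ for this topology. *)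

theory Defs
  imports "HOL-Analysis.Analysis" "Jordan_Normal_Form.Determinant"
begin

text \<open>The unit circle T is represented as the unit circle in the complex plane,
  via the point z = exp(i theta).\<close>

definition circ_measures :: "complex measure set" where
  "circ_measures = {M. sets M = sets (restrict_space borel (sphere 0 1)) \<and> finite_measure M}"

text \<open>Covariance lag c_k = (1/2pi) int e^{-ik theta} dmu(theta); with z = e^{i theta},
  e^{-ik theta} = (cnj z)^k.\<close>
definition cov_lag :: "complex measure \<Rightarrow> nat \<Rightarrow> complex" where
  "cov_lag M k = (1 / (2 * pi)) * integral\<^sup>L M (\<lambda>z. (cnj z) ^ k)"

definition F_set :: "nat \<Rightarrow> (nat \<Rightarrow> complex) \<Rightarrow> complex measure set" where
  "F_set n a = {M \<in> circ_measures. \<forall>k\<le>n. cov_lag M k = a k}"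

definition diam_delta :: "(complex measure \<Rightarrow> complex measure \<Rightarrow> real) \<Rightarrow> complex measure set \<Rightarrow> real" where
  "diam_delta \<delta> F = Sup {\<delta> M0 M1 | M0 M1. M0 \<in> F \<and> M1 \<in> F}"

definition is_cov_vector :: "nat \<Rightarrow> (nat \<Rightarrow> complex) \<Rightarrow> bool" where
  "is_cov_vector n a \<longleftrightarrow> (\<exists>M \<in> circ_measures. \<forall>k\<le>n. cov_lag M k = a k)"

definition toeplitz :: "nat \<Rightarrow> (nat \<Rightarrow> complex) \<Rightarrow> complex mat" where
  "toeplitz n c = mat (Suc n) (Suc n) (\<lambda>(k, l). if l \<le> k then c (k - l) else cnj (c (l - k)))"

definition weak_top :: "complex measure topology" where
  "weak_top = topology_generated_by
     {{M \<in> circ_measures. integral\<^sup>L M f \<in> U} | f U.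
        continuous_on (sphere 0 1) (f :: complex \<Rightarrow> real) \<and> open U}"

definition is_metric_on :: "'a set \<Rightarrow> ('a \<Rightarrow> 'a \<Rightarrow> real) \<Rightarrow> bool" where
  "is_metric_on S d \<longleftrightarrow>
     (\<forall>x\<in>S. \<forall>y\<in>S. 0 \<le> d x y \<and> (d x y = 0 \<longleftrightarrow> x = y) \<and> d x y = d y x) \<and>
     (\<forall>x\<in>S. \<forall>y\<in>S. \<forall>z\<in>S. d x z \<le> d x y + d y z)"

definition weakly_continuous :: "(complex measure \<Rightarrow> complex measure \<Rightarrow> real) \<Rightarrow> bool" where
  "weakly_continuous \<delta> \<longleftrightarrow>
     continuous_map (prod_topology weak_top weak_top) euclideanreal (\<lambda>(M, N). \<delta> M N)"

end

theory Submission
  imports Defs "HOL-Computational_Algebra.Polynomial"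
begin

text \<open>
  A nonzero vector in the kernel of the singular Toeplitz matrix gives a nonzero polynomial p of
  degree at most n with \<open>\<integral> |p|\<^sup>2 d\<mu> = 0\<close>, so the limit measure \<mu> lives on the finitely many zeros
  of p on the circle. Given a continuous f, interpolate it on those zeros by a polynomial q of
  degree at most n; by compactness, \<open>|f - q| \<le> \<eta> + C |p|\<^sup>2\<close> on the circle for any \<open>\<eta> > 0\<close>. Since
  the integrals of q and of \<open>|p|\<^sup>2\<close> against any measure only involve its first n + 1 covariance lags,
  \<open>\<integral> f dM\<close> is uniformly close to \<open>\<integral> f d\<mu>\<close> for all M in \<open>\<F>\<^sub>a\<close> once a is close to c. Hence
  the sets \<open>\<F>\<close> eventually lie in every weak neighbourhood of \<mu>, and weak continuity of \<delta> together
  with \<open>\<delta>(\<mu>, \<mu>) = 0\<close> makes their diameters tend to 0.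
\<close>

lemma space_circ_measure: "M \<in> circ_measures \<Longrightarrow> space M = sphere 0 1"
  using sets_eq_imp_space_eq[of M "restrict_space borel (sphere (0::complex) 1)"]
  by (simp add: circ_measures_def space_restrict_space)

lemma integrable_continuous_on_circle:
  fixes g :: "complex \<Rightarrow> 'b::{banach, second_countable_topology}"
  assumes M: "M \<in> circ_measures" and g: "continuous_on (sphere 0 1) g"
  shows "integrable M g"
proof -
  interpret finite_measure M using M by (simp add: circ_measures_def)
  obtain B where B: "\<And>z. z \<in> sphere 0 1 \<Longrightarrow> norm (g z) \<le> B"
    using compact_imp_bounded[OF compact_continuous_image[OF g compact_sphere]]
    by (metis bounded_iff image_eqI)
  have "sets M = sets (restrict_space borel (sphere (0::complex) 1))"
    using M by (simp add: circ_measures_def)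
  then have "g \<in> borel_measurable M"
    by (subst measurable_cong_sets[OF _ refl]) (auto intro: borel_measurable_continuous_on_restrict[OF g])
  then show ?thesis
    by (intro integrable_const_bound[where B=B]) (auto simp: space_circ_measure[OF M] B)
qed

lemma measure_space_circ_measure:
  "M \<in> circ_measures \<Longrightarrow> measure M (space M) = 2 * pi * Re (cov_lag M 0)"
  by (simp add: cov_lag_def)

definition toeplitz_entry :: "(nat \<Rightarrow> complex) \<Rightarrow> nat \<Rightarrow> nat \<Rightarrow> complex" where
  "toeplitz_entry a k l = (if l \<le> k then a (k - l) else cnj (a (l - k)))"

definition toeplitz_form :: "nat \<Rightarrow> (nat \<Rightarrow> complex) \<Rightarrow> (nat \<Rightarrow> complex) \<Rightarrow> complex" where
  "toeplitz_form n a v = (\<Sum>k\<le>n. \<Sum>l\<le>n. cnj (v k) * v l * toeplitz_entry a k l)"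

lemma toeplitz_form_cong:
  "(\<And>k. k \<le> n \<Longrightarrow> a k = b k) \<Longrightarrow> toeplitz_form n a v = toeplitz_form n b v"
  unfolding toeplitz_form_def toeplitz_entry_def by (intro sum.cong refl) auto

lemma toeplitz_form_tendsto:
  assumes "\<And>i. i \<le> n \<Longrightarrow> (\<lambda>j. a j i) \<longlonglongrightarrow> c i"
  shows "(\<lambda>j. toeplitz_form n (a j) v) \<longlonglongrightarrow> toeplitz_form n c v"
  unfolding toeplitz_form_def toeplitz_entry_def
  by (intro tendsto_sum tendsto_mult tendsto_const) (auto intro!: tendsto_cnj assms)

subsection \<open>Moments of polynomials\<close>

lemma integral_cnj_power_mult_power:
  assumes M: "M \<in> circ_measures"
  shows "integral\<^sup>L M (\<lambda>z. cnj z ^ k * z ^ l) = 2 * pi * toeplitz_entry (cov_lag M) k l"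
proof -
  have unit: "cnj z * z = 1" if "z \<in> space M" for z
    using that complex_norm_square[of z] by (simp add: space_circ_measure[OF M] mult.commute)
  show ?thesis
  proof (cases "l \<le> k")
    case True
    then obtain d where d: "k = l + d" using le_Suc_ex by blast
    have "cnj z ^ k * z ^ l = cnj z ^ d * (cnj z * z) ^ l" for z
      by (simp add: d power_add power_mult_distrib)
    then have "integral\<^sup>L M (\<lambda>z. cnj z ^ k * z ^ l) = integral\<^sup>L M (\<lambda>z. cnj z ^ d)"
      by (intro Bochner_Integration.integral_cong) (simp_all add: unit)
    then show ?thesis using True by (simp add: toeplitz_entry_def cov_lag_def d)
  next
    case False
    then obtain d where d: "l = k + d" by (metis le_Suc_ex nat_le_linear)
    have "cnj z ^ k * z ^ l = cnj (cnj z ^ d) * (cnj z * z) ^ k" for z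
      by (simp add: d power_add power_mult_distrib)
    then have "integral\<^sup>L M (\<lambda>z. cnj z ^ k * z ^ l) = integral\<^sup>L M (\<lambda>z. cnj (cnj z ^ d))"
      by (intro Bochner_Integration.integral_cong) (simp_all add: unit del: complex_cnj_power)
    also have "\<dots> = cnj (integral\<^sup>L M (\<lambda>z. cnj z ^ d))"
      by (rule Bochner_Integration.integral_cnj)
    finally show ?thesis using False by (simp add: toeplitz_entry_def cov_lag_def d)
  qed
qed

lemma poly_eq_sum_upto:
  fixes p :: "'a::comm_semiring_1 poly"
  assumes "degree p \<le> n"
  shows "poly p z = (\<Sum>i\<le>n. coeff p i * z ^ i)"
proof -
  have "poly p z = (\<Sum>i\<le>degree p. coeff p i * z ^ i)"
    by (rule poly_altdef)
  also have "\<dots> = (\<Sum>i\<le>n. coeff p i * z ^ i)"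
    using assms by (intro sum.mono_neutral_left) (auto simp: coeff_eq_0)
  finally show ?thesis .
qed

lemma integral_poly_circ_measure:
  assumes M: "M \<in> circ_measures" and "degree q \<le> n"
  shows "integral\<^sup>L M (poly q) = 2 * pi * (\<Sum>i\<le>n. coeff q i * cnj (cov_lag M i))"
proof -
  have "integral\<^sup>L M (poly q) = integral\<^sup>L M (\<lambda>z. \<Sum>i\<le>n. coeff q i * cnj (cnj z ^ i))"
    by (intro arg_cong[where f="integral\<^sup>L M"] ext) (simp add: poly_eq_sum_upto[OF assms(2)])
  also have "\<dots> = (\<Sum>i\<le>n. coeff q i * cnj (integral\<^sup>L M (\<lambda>z. cnj z ^ i)))"
    by (subst Bochner_Integration.integral_sum)
      (auto intro!: integrable_continuous_on_circle[OF M] continuous_intros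
        simp del: complex_cnj_power)
  finally show ?thesis by (simp add: cov_lag_def sum_distrib_left algebra_simps)
qed

lemma integral_norm_poly_squared:
  assumes M: "M \<in> circ_measures" and "degree p \<le> n"
  shows "complex_of_real (integral\<^sup>L M (\<lambda>z. (cmod (poly p z))\<^sup>2))
           = 2 * pi * toeplitz_form n (cov_lag M) (coeff p)"
proof -
  have square: "complex_of_real ((cmod (poly p z))\<^sup>2)
      = (\<Sum>k\<le>n. \<Sum>l\<le>n. cnj (coeff p k) * coeff p l * (cnj z ^ k * z ^ l))" for z
  proof -
    have "complex_of_real ((cmod (poly p z))\<^sup>2) = cnj (poly p z) * poly p z"
      using complex_norm_square by (simp add: mult.commute)
    also have "\<dots> = (\<Sum>k\<le>n. cnj (coeff p k) * cnj z ^ k) * (\<Sum>l\<le>n. coeff p l * z ^ l)"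
      using assms(2) by (simp add: poly_eq_sum_upto cnj_sum)
    also have "\<dots> = (\<Sum>k\<le>n. \<Sum>l\<le>n. cnj (coeff p k) * cnj z ^ k * (coeff p l * z ^ l))"
      by (rule sum_product)
    finally show ?thesis by (simp add: algebra_simps)
  qed
  have "complex_of_real (integral\<^sup>L M (\<lambda>z. (cmod (poly p z))\<^sup>2))
      = integral\<^sup>L M (\<lambda>z. \<Sum>k\<le>n. \<Sum>l\<le>n. cnj (coeff p k) * coeff p l * (cnj z ^ k * z ^ l))"
    by (simp only: integral_complex_of_real[symmetric] square)
  also have "\<dots> = (\<Sum>k\<le>n. \<Sum>l\<le>n. cnj (coeff p k) * coeff p l * integral\<^sup>L M (\<lambda>z. cnj z ^ k * z ^ l))"
    by (simp add: Bochner_Integration.integral_sum integrable_continuous_on_circle[OF M]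
        continuous_intros)
  also have "\<dots> = 2 * pi * toeplitz_form n (cov_lag M) (coeff p)"
    unfolding integral_cnj_power_mult_power[OF M] toeplitz_form_def
    by (simp add: sum_distrib_left algebra_simps)
  finally show ?thesis .
qed

lemma singular_toeplitz_kernel_poly:
  assumes "det (toeplitz n c) = 0"
  obtains p where "p \<noteq> 0" "degree p \<le> n" "toeplitz_form n c (coeff p) = 0"
proof -
  have "toeplitz n c \<in> carrier_mat (Suc n) (Suc n)" by (simp add: toeplitz_def)
  then obtain w where w: "w \<in> carrier_vec (Suc n)" "w \<noteq> 0\<^sub>v (Suc n)" "toeplitz n c *\<^sub>v w = 0\<^sub>v (Suc n)"
    using det_0_iff_vec_prod_zero assms by blast
  define p where "p = (\<Sum>l\<le>n. monom (w $ l) l)"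
  have coeff_p: "coeff p l = (if l \<le> n then w $ l else 0)" for l
    by (simp add: p_def coeff_sum coeff_monom)
  have row: "(\<Sum>l\<le>n. toeplitz_entry c k l * coeff p l) = 0" if "k \<le> n" for k
  proof -
    have "(toeplitz n c *\<^sub>v w) $ k = 0" using w(3) that by simp
    then show ?thesis using that w(1)
      by (simp add: toeplitz_def toeplitz_entry_def scalar_prod_def coeff_p atLeast0LessThan
          lessThan_Suc_atMost)
  qed
  have "toeplitz_form n c (coeff p) = (\<Sum>k\<le>n. cnj (coeff p k) * (\<Sum>l\<le>n. toeplitz_entry c k l * coeff p l))"
    unfolding toeplitz_form_def by (simp add: sum_distrib_left algebra_simps)
  then have "toeplitz_form n c (coeff p) = 0" using row by simp
  moreover have "p \<noteq> 0"
  proof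
    assume "p = 0"
    then have "w $ l = 0" if "l \<le> n" for l
      using coeff_p[of l] that by simp
    then have "w = 0\<^sub>v (Suc n)"
      using w(1) by (intro eq_vecI) (auto simp: less_Suc_eq_le)
    with w(2) show False by simp
  qed
  moreover have "degree p \<le> n"
    using coeff_p by (intro degree_le) auto
  ultimately show ?thesis using that by blast
qed

subsection \<open>Approximation modulo the zeros of a polynomial\<close>

lemma exists_interpolating_poly:
  fixes f :: "complex \<Rightarrow> complex"
  assumes "finite Z"
  obtains q where "degree q \<le> card Z - 1" "\<And>z. z \<in> Z \<Longrightarrow> poly q z = f z"
proof -
  have "\<exists>q. degree q \<le> card Z - 1 \<and> (\<forall>z\<in>Z. poly q z = f z)"
    using assms
  proof (induction Z rule: finite_induct)
    case empty
    show ?case by (rule exI[of _ 0]) simp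
  next
    case (insert a F)
    then obtain q' where q': "degree q' \<le> card F - 1" "\<forall>z\<in>F. poly q' z = f z" by blast
    define W where "W = (\<Prod>z\<in>F. [:-z, 1:])"
    have "degree W \<le> card F"
      using degree_prod_sum_le[OF insert.hyps(1), of "\<lambda>z. [:-z, 1:]"] by (simp add: W_def o_def)
    have poly_W: "poly W z = (\<Prod>y\<in>F. z - y)" for z by (simp add: W_def poly_prod)
    have "poly W a \<noteq> 0" unfolding poly_W using insert.hyps by auto
    define q where "q = q' + Polynomial.smult ((f a - poly q' a) / poly W a) W"
    have "degree q \<le> max (degree q') (degree (Polynomial.smult ((f a - poly q' a) / poly W a) W))"
      unfolding q_def by (rule degree_add_le_max)
    also have "\<dots> \<le> card F"
      by (intro max.boundedI) (use q'(1) in linarith, rule le_trans[OF degree_smult_le \<open>degree W \<le> card F\<close>])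
    finally have "degree q \<le> card F" .
    moreover have "\<forall>z\<in>insert a F. poly q z = f z"
      using q'(2) \<open>poly W a \<noteq> 0\<close> insert.hyps(1) by (auto simp: q_def poly_W)
    ultimately show ?case using insert.hyps by (intro exI[of _ q]) auto
  qed
  then show ?thesis using that by blast
qed

text \<open>On the compact set where \<open>|g| \<ge> \<eta>\<close> the function h has a positive minimum.\<close>

lemma norm_le_eps_plus_multiple:
  fixes g :: "complex \<Rightarrow> complex" and h :: "complex \<Rightarrow> real"
  assumes K: "compact K" and g: "continuous_on K g" and h: "continuous_on K h"
    and h_nonneg: "\<And>z. z \<in> K \<Longrightarrow> 0 \<le> h z" and zeros: "\<And>z. z \<in> K \<Longrightarrow> h z = 0 \<Longrightarrow> g z = 0"
    and "\<eta> > 0"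
  obtains C where "C \<ge> 0" "\<And>z. z \<in> K \<Longrightarrow> cmod (g z) \<le> \<eta> + C * h z"
proof -
  define K' where "K' = K \<inter> (\<lambda>z. cmod (g z)) -` {\<eta>..}"
  have "closed K'"
    unfolding K'_def using g
    by (intro continuous_closed_preimage compact_imp_closed K continuous_intros) auto
  then have "compact K'"
    using K unfolding K'_def by (metis Int_absorb1 Int_lower1 compact_Int_closed)
  obtain B where B: "\<And>z. z \<in> K \<Longrightarrow> cmod (g z) \<le> B"
    using compact_imp_bounded[OF compact_continuous_image[OF g K]] by (metis bounded_iff image_eqI)
  show ?thesis
  proof (cases "K' = {}")
    case True
    then show ?thesis using that[of 0] by (force simp: K'_def)
  next
    case False
    obtain x0 where x0: "x0 \<in> K'" "\<And>y. y \<in> K' \<Longrightarrow> h x0 \<le> h y"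
      using continuous_attains_inf[OF \<open>compact K'\<close> False continuous_on_subset[OF h]]
      unfolding K'_def by blast
    then have "x0 \<in> K" "cmod (g x0) \<ge> \<eta>" by (auto simp: K'_def)
    then have "h x0 > 0" using zeros h_nonneg \<open>\<eta> > 0\<close> by force
    have "B \<ge> 0" using B[OF \<open>x0 \<in> K\<close>] norm_ge_zero[of "g x0"] by linarith
    show ?thesis
    proof (rule that[of "B / h x0"])
      show "B / h x0 \<ge> 0" using \<open>B \<ge> 0\<close> \<open>h x0 > 0\<close> by simp
      fix z assume "z \<in> K"
      show "cmod (g z) \<le> \<eta> + B / h x0 * h z"
      proof (cases "z \<in> K'")
        case True
        then have "B \<le> B / h x0 * h z"
          using x0(2) \<open>h x0 > 0\<close> \<open>B \<ge> 0\<close> by (simp add: field_simps mult_left_mono)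
        then show ?thesis using B[OF \<open>z \<in> K\<close>] \<open>\<eta> > 0\<close> by linarith
      next
        case False
        then have "cmod (g z) < \<eta>" using \<open>z \<in> K\<close> by (simp add: K'_def)
        moreover have "0 \<le> B / h x0 * h z"
          using \<open>B \<ge> 0\<close> \<open>h x0 > 0\<close> h_nonneg[OF \<open>z \<in> K\<close>] by simp
        ultimately show ?thesis by linarith
      qed
    qed
  qed
qed

lemma approx_modulo_poly_zeros:
  fixes f :: "complex \<Rightarrow> real" and p :: "complex poly"
  assumes "p \<noteq> 0" and f: "continuous_on (sphere 0 1) f" and "\<eta> > 0"
  obtains q C where "degree q \<le> degree p" "C \<ge> 0"
    "\<And>z. z \<in> sphere 0 1 \<Longrightarrow> cmod (complex_of_real (f z) - poly q z) \<le> \<eta> + C * (cmod (poly p z))\<^sup>2"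
proof -
  define Z where "Z = {z \<in> sphere 0 1. poly p z = 0}"
  have "Z \<subseteq> {z. poly p z = 0}" by (auto simp: Z_def)
  then have "finite Z" "card Z \<le> degree p"
    using poly_roots_finite[OF \<open>p \<noteq> 0\<close>] card_poly_roots_bound[OF \<open>p \<noteq> 0\<close>]
    by (auto intro: finite_subset dest: card_mono)
  obtain q where q: "degree q \<le> card Z - 1" "\<And>z. z \<in> Z \<Longrightarrow> poly q z = complex_of_real (f z)"
    using exists_interpolating_poly[OF \<open>finite Z\<close>, of "\<lambda>z. complex_of_real (f z)"] by blast
  have zeros: "complex_of_real (f z) - poly q z = 0" if "z \<in> sphere 0 1" "(cmod (poly p z))\<^sup>2 = 0" for z
    using that q(2) by (simp add: Z_def)
  have cont_diff: "continuous_on (sphere 0 1) (\<lambda>z. complex_of_real (f z) - poly q z)"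
    using f by (intro continuous_intros) auto
  have cont_square: "continuous_on (sphere 0 1) (\<lambda>z. (cmod (poly p z))\<^sup>2)"
    by (intro continuous_intros)
  obtain C where "C \<ge> 0"
    "\<And>z. z \<in> sphere 0 1 \<Longrightarrow> cmod (complex_of_real (f z) - poly q z) \<le> \<eta> + C * (cmod (poly p z))\<^sup>2"
    using norm_le_eps_plus_multiple[OF compact_sphere cont_diff cont_square zero_le_power2 zeros \<open>\<eta> > 0\<close>]
    by blast
  moreover have "degree q \<le> degree p" using q(1) \<open>card Z \<le> degree p\<close> by linarith
  ultimately show ?thesis using that by blast
qed

subsection \<open>Uniform convergence of integrals over the sets \<open>\<F>\<close>\<close>

lemma integral_near_poly_moment:
  fixes f :: "complex \<Rightarrow> real"
  assumes M: "M \<in> F_set n a" and f: "continuous_on (sphere 0 1) f"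
    and "degree p \<le> n" "degree q \<le> n"
    and bound: "\<And>z. z \<in> sphere 0 1 \<Longrightarrow> cmod (complex_of_real (f z) - poly q z) \<le> \<eta> + C * (cmod (poly p z))\<^sup>2"
  shows "cmod (complex_of_real (integral\<^sup>L M f) - 2 * pi * (\<Sum>i\<le>n. coeff q i * cnj (a i)))
           \<le> 2 * pi * (\<eta> * Re (a 0) + C * Re (toeplitz_form n a (coeff p)))"
proof -
  have Mc: "M \<in> circ_measures" and lags: "\<And>k. k \<le> n \<Longrightarrow> cov_lag M k = a k"
    using M by (auto simp: F_set_def)
  interpret finite_measure M using Mc by (simp add: circ_measures_def)
  note integrable = integrable_continuous_on_circle[OF Mc]
  have cont_diff: "continuous_on (sphere 0 1) (\<lambda>z. complex_of_real (f z) - poly q z)"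
    using f by (intro continuous_intros) auto
  have int_square: "integrable M (\<lambda>z. (cmod (poly p z))\<^sup>2)"
    by (rule integrable) (intro continuous_intros)
  have "integral\<^sup>L M (poly q) = 2 * pi * (\<Sum>i\<le>n. coeff q i * cnj (a i))"
    unfolding integral_poly_circ_measure[OF Mc \<open>degree q \<le> n\<close>] by (simp add: lags)
  moreover have "integral\<^sup>L M (\<lambda>z. complex_of_real (f z) - poly q z)
      = complex_of_real (integral\<^sup>L M f) - integral\<^sup>L M (poly q)"
  proof -
    have "integrable M (\<lambda>z. complex_of_real (f z))" "integrable M (\<lambda>z. poly q z)"
      using f by (auto intro!: integrable continuous_intros)
    then show ?thesis by (simp add: Bochner_Integration.integral_diff)
  qed
  ultimately have "complex_of_real (integral\<^sup>L M f) - 2 * pi * (\<Sum>i\<le>n. coeff q i * cnj (a i))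
      = integral\<^sup>L M (\<lambda>z. complex_of_real (f z) - poly q z)"
    by simp
  also have "cmod \<dots> \<le> integral\<^sup>L M (\<lambda>z. cmod (complex_of_real (f z) - poly q z))"
    by (rule integral_norm_bound)
  also have "\<dots> \<le> integral\<^sup>L M (\<lambda>z. \<eta> + C * (cmod (poly p z))\<^sup>2)"
  proof (rule integral_mono)
    show "integrable M (\<lambda>z. cmod (complex_of_real (f z) - poly q z))"
      using integrable[OF cont_diff] by (rule integrable_norm)
    show "integrable M (\<lambda>z. \<eta> + C * (cmod (poly p z))\<^sup>2)"
      using int_square by simp
  qed (simp add: bound space_circ_measure[OF Mc])
  also have "\<dots> = \<eta> * measure M (space M) + C * integral\<^sup>L M (\<lambda>z. (cmod (poly p z))\<^sup>2)"
    using int_square by simp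
  also have "\<dots> = 2 * pi * (\<eta> * Re (a 0) + C * Re (toeplitz_form n a (coeff p)))"
  proof -
    have "complex_of_real (integral\<^sup>L M (\<lambda>z. (cmod (poly p z))\<^sup>2)) = 2 * pi * toeplitz_form n a (coeff p)"
      using integral_norm_poly_squared[OF Mc \<open>degree p \<le> n\<close>] toeplitz_form_cong[of n "cov_lag M" a, OF lags]
      by simp
    from arg_cong[OF this, of Re] show ?thesis
      using measure_space_circ_measure[OF Mc] lags[of 0] by (simp add: algebra_simps)
  qed
  finally show ?thesis .
qed

lemma norm_diff_le_three:
  fixes u v x y :: "'a::real_normed_vector"
  shows "norm (u - v) \<le> norm (x - y) + norm (u - x) + norm (v - y)"
proof -
  have "norm (u - v) \<le> norm (x - y) + norm ((u - x) - (v - y))"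
    using norm_triangle_ineq[of "x - y" "(u - x) - (v - y)"] by (simp add: algebra_simps)
  also have "norm ((u - x) - (v - y)) \<le> norm (u - x) + norm (v - y)"
    by (rule norm_triangle_ineq4)
  finally show ?thesis by simp
qed

lemma F_set_integrals_converge_uniformly:
  fixes f :: "complex \<Rightarrow> real"
  assumes \<mu>: "\<mu> \<in> F_set n c"
    and p: "p \<noteq> 0" "degree p \<le> n" "toeplitz_form n c (coeff p) = 0"
    and lim: "\<And>i. i \<le> n \<Longrightarrow> (\<lambda>j. a j i) \<longlonglongrightarrow> c i"
    and f: "continuous_on (sphere 0 1) f" and "e > 0"
  shows "\<forall>\<^sub>F j in sequentially. \<forall>M \<in> F_set n (a j). \<bar>integral\<^sup>L M f - integral\<^sup>L \<mu> f\<bar> < e"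
proof -
  define m where "m = 2 * pi * Re (c 0)"
  have "m \<ge> 0"
    using \<mu> measure_space_circ_measure[of \<mu>] measure_nonneg[of \<mu> "space \<mu>"]
    by (auto simp: F_set_def m_def)
  define \<eta> where "\<eta> = e / (4 * (m + 1))"
  have "\<eta> > 0" using \<open>e > 0\<close> \<open>m \<ge> 0\<close> by (simp add: \<eta>_def)
  obtain q C where "degree q \<le> degree p" and C: "C \<ge> 0"
    "\<And>z. z \<in> sphere 0 1 \<Longrightarrow> cmod (complex_of_real (f z) - poly q z) \<le> \<eta> + C * (cmod (poly p z))\<^sup>2"
    using approx_modulo_poly_zeros[OF p(1) f \<open>\<eta> > 0\<close>] by blast
  then have q: "degree q \<le> n" using p(2) by simp
  define Q where "Q b = 2 * pi * (\<Sum>i\<le>n. coeff q i * cnj (b i))" for b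
  define B where "B b = 2 * pi * (\<eta> * Re (b 0) + C * Re (toeplitz_form n b (coeff p)))" for b
  have close: "cmod (complex_of_real (integral\<^sup>L M f) - Q b) \<le> B b" if "M \<in> F_set n b" for M b
    unfolding Q_def B_def by (rule integral_near_poly_moment[OF that f p(2) q C(2)])
  have "(\<lambda>j. Q (a j)) \<longlonglongrightarrow> Q c"
    unfolding Q_def by (intro tendsto_intros lim) simp
  moreover have "(\<lambda>j. B (a j)) \<longlonglongrightarrow> B c"
    unfolding B_def by (intro tendsto_intros toeplitz_form_tendsto lim) simp
  ultimately have "(\<lambda>j. cmod (Q (a j) - Q c) + B (a j) + B c) \<longlonglongrightarrow> cmod (Q c - Q c) + B c + B c"
    by (intro tendsto_intros)
  moreover have "cmod (Q c - Q c) + B c + B c < e"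
  proof -
    have "B c = \<eta> * m" by (simp add: B_def p(3) m_def)
    moreover have "\<eta> * m \<le> \<eta> * (m + 1)" using \<open>\<eta> > 0\<close> by simp
    moreover have "\<eta> * (m + 1) = e / 4"
      using \<open>m \<ge> 0\<close> by (simp add: \<eta>_def field_simps)
    ultimately show ?thesis using \<open>e > 0\<close> by simp
  qed
  ultimately have "\<forall>\<^sub>F j in sequentially. cmod (Q (a j) - Q c) + B (a j) + B c < e"
    by (rule order_tendstoD(2))
  then show ?thesis
  proof (rule eventually_mono, intro ballI)
    fix j M assume "cmod (Q (a j) - Q c) + B (a j) + B c < e" "M \<in> F_set n (a j)"
    have "\<bar>integral\<^sup>L M f - integral\<^sup>L \<mu> f\<bar>
        = cmod (complex_of_real (integral\<^sup>L M f) - complex_of_real (integral\<^sup>L \<mu> f))"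
      by (simp flip: of_real_diff)
    also have "\<dots> \<le> cmod (Q (a j) - Q c) + cmod (complex_of_real (integral\<^sup>L M f) - Q (a j))
          + cmod (complex_of_real (integral\<^sup>L \<mu> f) - Q c)"
      by (rule norm_diff_le_three)
    finally show "\<bar>integral\<^sup>L M f - integral\<^sup>L \<mu> f\<bar> < e"
      using close[OF \<open>M \<in> F_set n (a j)\<close>] close[OF \<mu>] \<open>cmod (Q (a j) - Q c) + B (a j) + B c < e\<close>
      by linarith
  qed
qed

subsection \<open>Weak neighbourhoods\<close>

definition weak_nbhd :: "complex measure \<Rightarrow> (complex \<Rightarrow> real) set \<Rightarrow> real \<Rightarrow> complex measure set" where
  "weak_nbhd \<mu> S e = {M \<in> circ_measures. \<forall>f\<in>S. \<bar>integral\<^sup>L M f - integral\<^sup>L \<mu> f\<bar> < e}"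

definition contains_weak_nbhd :: "complex measure \<Rightarrow> complex measure set \<Rightarrow> bool" where
  "contains_weak_nbhd \<mu> U \<longleftrightarrow>
     (\<exists>S e. finite S \<and> e > 0 \<and> (\<forall>f\<in>S. continuous_on (sphere 0 1) f) \<and> weak_nbhd \<mu> S e \<subseteq> U)"

lemma contains_weak_nbhd_mono:
  "contains_weak_nbhd \<mu> U \<Longrightarrow> U \<subseteq> V \<Longrightarrow> contains_weak_nbhd \<mu> V"
  unfolding contains_weak_nbhd_def by (meson order_trans)

lemma contains_weak_nbhd_Int:
  assumes "contains_weak_nbhd \<mu> U" "contains_weak_nbhd \<mu> V"
  shows "contains_weak_nbhd \<mu> (U \<inter> V)"
proof -
  obtain S e T e' where
    "finite S" "e > 0" "\<forall>f\<in>S. continuous_on (sphere 0 1) f" "weak_nbhd \<mu> S e \<subseteq> U"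
    "finite T" "e' > 0" "\<forall>f\<in>T. continuous_on (sphere 0 1) f" "weak_nbhd \<mu> T e' \<subseteq> V"
    using assms unfolding contains_weak_nbhd_def by blast
  moreover have "weak_nbhd \<mu> (S \<union> T) (min e e') \<subseteq> weak_nbhd \<mu> S e \<inter> weak_nbhd \<mu> T e'"
    by (auto simp: weak_nbhd_def)
  ultimately show ?thesis
    unfolding contains_weak_nbhd_def by (intro exI[of _ "S \<union> T"] exI[of _ "min e e'"]) auto
qed

lemma contains_weak_nbhd_subbasis:
  fixes f :: "complex \<Rightarrow> real"
  assumes f: "continuous_on (sphere 0 1) f" and "open V" "integral\<^sup>L \<mu> f \<in> V"
  shows "contains_weak_nbhd \<mu> {M \<in> circ_measures. integral\<^sup>L M f \<in> V}"
proof -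
  obtain e where "e > 0" "ball (integral\<^sup>L \<mu> f) e \<subseteq> V"
    using \<open>open V\<close> \<open>integral\<^sup>L \<mu> f \<in> V\<close> openE by blast
  then have "weak_nbhd \<mu> {f} e \<subseteq> {M \<in> circ_measures. integral\<^sup>L M f \<in> V}"
    by (auto simp: weak_nbhd_def dist_real_def abs_minus_commute)
  then show ?thesis
    unfolding contains_weak_nbhd_def using \<open>e > 0\<close> f by (intro exI[of _ "{f}"] exI[of _ e]) auto
qed

lemma openin_weak_top_contains_weak_nbhd:
  assumes "openin weak_top U" "\<mu> \<in> U"
  shows "contains_weak_nbhd \<mu> U"
proof -
  have "\<forall>\<mu>\<in>U. contains_weak_nbhd \<mu> U"
    using assms(1) unfolding weak_top_def openin_topology_generated_by_iff
  proof (induction rule: generate_topology_on.induct)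
    case (Int U V)
    then show ?case by (simp add: contains_weak_nbhd_Int)
  next
    case (UN K)
    then show ?case by (meson UnionE Union_upper contains_weak_nbhd_mono)
  next
    case (Basis s)
    then show ?case by (auto intro: contains_weak_nbhd_subbasis)
  qed simp
  then show ?thesis using assms(2) by blast
qed

lemma topspace_weak_top: "topspace weak_top = circ_measures"
proof -
  have "circ_measures = {M \<in> circ_measures. integral\<^sup>L M (\<lambda>_. 0) \<in> UNIV}" by simp
  then have "circ_measures \<in> {{M \<in> circ_measures. integral\<^sup>L M f \<in> U} | f U.
      continuous_on (sphere 0 1) (f :: complex \<Rightarrow> real) \<and> open U}"
    by blast
  then show ?thesis unfolding weak_top_def topology_generated_by_topspace by blast
qed

lemma F_set_eventually_subset_weak_nbhd:
  assumes \<mu>: "\<mu> \<in> F_set n c"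
    and p: "p \<noteq> 0" "degree p \<le> n" "toeplitz_form n c (coeff p) = 0"
    and lim: "\<And>i. i \<le> n \<Longrightarrow> (\<lambda>j. a j i) \<longlonglongrightarrow> c i"
    and S: "finite S" "\<forall>f\<in>S. continuous_on (sphere 0 1) f" and "e > 0"
  shows "\<forall>\<^sub>F j in sequentially. F_set n (a j) \<subseteq> weak_nbhd \<mu> S e"
proof -
  have "\<forall>\<^sub>F j in sequentially. \<forall>f\<in>S. \<forall>M \<in> F_set n (a j). \<bar>integral\<^sup>L M f - integral\<^sup>L \<mu> f\<bar> < e"
    using S \<open>e > 0\<close> by (intro eventually_ball_finite ballI F_set_integrals_converge_uniformly[OF \<mu> p lim]) auto
  then show ?thesis
    by (rule eventually_mono) (auto simp: weak_nbhd_def F_set_def)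
qed

lemma weakly_continuous_small_on_weak_nbhd:
  assumes "weakly_continuous \<delta>" "\<mu> \<in> circ_measures" "\<delta> \<mu> \<mu> = 0" "\<epsilon> > 0"
  obtains S e where "finite S" "e > 0" "\<forall>f\<in>S. continuous_on (sphere 0 1) f"
    "\<And>M N. M \<in> weak_nbhd \<mu> S e \<Longrightarrow> N \<in> weak_nbhd \<mu> S e \<Longrightarrow> \<delta> M N < \<epsilon>"
proof -
  define W where "W = {x \<in> topspace (prod_topology weak_top weak_top). (\<lambda>(M, N). \<delta> M N) x \<in> {..<\<epsilon>}}"
  have W_open: "openin (prod_topology weak_top weak_top) W"
    unfolding W_def using assms(1)
    by (intro openin_continuous_map_preimage) (auto simp: weakly_continuous_def)
  have "(\<mu>, \<mu>) \<in> W" using assms(2-4) by (simp add: W_def topspace_weak_top)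
  then obtain U V where UV: "openin weak_top U" "openin weak_top V" "\<mu> \<in> U" "\<mu> \<in> V" "U \<times> V \<subseteq> W"
    using W_open[unfolded openin_prod_topology_alt, rule_format, OF \<open>(\<mu>, \<mu>) \<in> W\<close>] by blast
  then have "contains_weak_nbhd \<mu> (U \<inter> V)"
    by (intro openin_weak_top_contains_weak_nbhd openin_Int) auto
  then obtain S e where S: "finite S" "e > 0" "\<forall>f\<in>S. continuous_on (sphere 0 1) f"
    and nbhd: "weak_nbhd \<mu> S e \<subseteq> U \<inter> V"
    unfolding contains_weak_nbhd_def by blast
  show ?thesis
  proof (rule that[OF S])
    fix M N assume "M \<in> weak_nbhd \<mu> S e" "N \<in> weak_nbhd \<mu> S e"
    then have "(M, N) \<in> W" using nbhd UV(5) by blast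
    then show "\<delta> M N < \<epsilon>" by (simp add: W_def)
  qed
qed

lemma abs_diam_delta_le:
  assumes "F \<noteq> {}" "\<And>M N. M \<in> F \<Longrightarrow> N \<in> F \<Longrightarrow> 0 \<le> \<delta> M N \<and> \<delta> M N \<le> e"
  shows "\<bar>diam_delta \<delta> F\<bar> \<le> e"
proof -
  define A where "A = {\<delta> M N | M N. M \<in> F \<and> N \<in> F}"
  obtain M where "M \<in> F" using assms(1) by blast
  then have "\<delta> M M \<in> A" by (auto simp: A_def)
  have "\<forall>x\<in>A. 0 \<le> x \<and> x \<le> e" using assms(2) by (auto simp: A_def)
  then have "Sup A \<le> e" using \<open>\<delta> M M \<in> A\<close> by (intro cSup_least) auto
  have "bdd_above A" using \<open>\<forall>x\<in>A. 0 \<le> x \<and> x \<le> e\<close> by (intro bdd_aboveI) blast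
  with \<open>\<delta> M M \<in> A\<close> have "\<delta> M M \<le> Sup A" by (rule cSup_upper)
  then have "0 \<le> Sup A" using \<open>\<delta> M M \<in> A\<close> \<open>\<forall>x\<in>A. 0 \<le> x \<and> x \<le> e\<close> by force
  with \<open>Sup A \<le> e\<close> show ?thesis by (simp add: diam_delta_def A_def)
qed

lemma weak_nbhd_small_diam_delta:
  assumes "weakly_continuous \<delta>" "is_metric_on circ_measures \<delta>" "\<mu> \<in> circ_measures" "\<epsilon> > 0"
  obtains S e where "finite S" "e > 0" "\<forall>f\<in>S. continuous_on (sphere 0 1) f"
    "\<And>F. F \<noteq> {} \<Longrightarrow> F \<subseteq> weak_nbhd \<mu> S e \<Longrightarrow> \<bar>diam_delta \<delta> F\<bar> < \<epsilon>"
proof -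
  have metric: "0 \<le> \<delta> M N \<and> (\<delta> M N = 0 \<longleftrightarrow> M = N)" if "M \<in> circ_measures" "N \<in> circ_measures" for M N
    using assms(2) that by (simp add: is_metric_on_def)
  obtain S e where S: "finite S" "e > 0" "\<forall>f\<in>S. continuous_on (sphere 0 1) f"
    and small: "\<And>M N. M \<in> weak_nbhd \<mu> S e \<Longrightarrow> N \<in> weak_nbhd \<mu> S e \<Longrightarrow> \<delta> M N < \<epsilon> / 2"
    using weakly_continuous_small_on_weak_nbhd[OF assms(1,3) _ half_gt_zero[OF assms(4)]] metric assms(3)
    by blast
  show ?thesis
  proof (rule that[OF S])
    fix F assume "F \<noteq> {}" and F: "F \<subseteq> weak_nbhd \<mu> S e"
    from \<open>F \<noteq> {}\<close> have "\<bar>diam_delta \<delta> F\<bar> \<le> \<epsilon> / 2"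
    proof (rule abs_diam_delta_le)
      fix M N assume "M \<in> F" "N \<in> F"
      then have "M \<in> weak_nbhd \<mu> S e" "N \<in> weak_nbhd \<mu> S e" using F by auto
      then show "0 \<le> \<delta> M N \<and> \<delta> M N \<le> \<epsilon> / 2"
        using small[of M N] metric[of M N] by (simp add: weak_nbhd_def)
    qed
    then show "\<bar>diam_delta \<delta> F\<bar> < \<epsilon>" using assms(4) by simp
  qed
qed

theorem corollary3:
  fixes n :: nat and c :: "nat \<Rightarrow> complex" and chat :: "nat \<Rightarrow> nat \<Rightarrow> complex"
    and \<delta> :: "complex measure \<Rightarrow> complex measure \<Rightarrow> real"
  assumes "is_cov_vector n c"
    and "det (toeplitz n c) = 0"
    and "\<And>j. is_cov_vector n (chat j)"
    and "\<And>i. i \<le> n \<Longrightarrow> (\<lambda>j. chat j i) \<longlonglongrightarrow> c i"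
    and "is_metric_on circ_measures \<delta>"
    and "weakly_continuous \<delta>"
  shows "(\<lambda>j. diam_delta \<delta> (F_set n (chat j))) \<longlonglongrightarrow> 0"
proof -
  obtain \<mu> where \<mu>: "\<mu> \<in> F_set n c"
    using assms(1) by (auto simp: is_cov_vector_def F_set_def)
  obtain p where p: "p \<noteq> 0" "degree p \<le> n" "toeplitz_form n c (coeff p) = 0"
    using singular_toeplitz_kernel_poly[OF assms(2)] .
  have "\<mu> \<in> circ_measures" using \<mu> by (simp add: F_set_def)
  have nonempty: "F_set n (chat j) \<noteq> {}" for j
    using assms(3)[of j] by (auto simp: is_cov_vector_def F_set_def)
  show ?thesis
    unfolding tendsto_iff
  proof (intro allI impI)
    fix \<epsilon> :: real assume "\<epsilon> > 0"
    obtain S e where S: "finite S" "e > 0" "\<forall>f\<in>S. continuous_on (sphere 0 1) f"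
      and diam: "\<And>F. F \<noteq> {} \<Longrightarrow> F \<subseteq> weak_nbhd \<mu> S e \<Longrightarrow> \<bar>diam_delta \<delta> F\<bar> < \<epsilon>"
      using weak_nbhd_small_diam_delta[OF assms(6,5) \<open>\<mu> \<in> circ_measures\<close> \<open>\<epsilon> > 0\<close>] by blast
    show "\<forall>\<^sub>F j in sequentially. dist (diam_delta \<delta> (F_set n (chat j))) 0 < \<epsilon>"
      using F_set_eventually_subset_weak_nbhd[OF \<mu> p assms(4) S(1,3) S(2)]
    proof (rule eventually_mono)
      fix j assume "F_set n (chat j) \<subseteq> weak_nbhd \<mu> S e"
      then show "dist (diam_delta \<delta> (F_set n (chat j))) 0 < \<epsilon>"
        using diam[OF nonempty[of j]] by simp
    qed
  qed
qed

end
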